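(* Let $m$ range over even integers tending to infinity, with $N=N(m)$, $n=n(m)$ positive integers satisfying $N=o(m)$ and $n=o(m)$, and fix $0<\varepsilon\le1$. Let $\bar J_2=5$. Then, uniformly over all $\omega\in K_m$ and all $x,y\in[m]^N$, $$\log\frac{\Pr_{(u,q^\omega,u)}\big(\{X=x,Y=y\}\cap B\big)}{\Pr_{(u,q^\omega,u)}\{X=x,Y=y\}}\ \ge\ -\bar J_2\,\frac{Nn+n^2}{m}\,(1+o(1)),$$ $$\log\frac{\Pr_{(u,q^\omega,q^\omega)}\big(\{X=x,Y=y\}\cap B\big)}{\Pr_{(u,q^\omega,q^\omega)}\{X=x,Y=y\}}\ \ge\ -\bar J_2\,\frac{Nn+n^2}{m}\,(1+o(1)),$$ where $B$ is the event that no symbol appears more than once in $Z$ and no symbol of $Z$ appears in $X$ or in $Y$.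
   Context: Let $u$ be the uniform distribution on $[m]=\{1,\dots,m\}$. Let $K_m$ be the collection of all subsets of $[m]$ of cardinality $m/2$. For $\omega\in K_m$ let $q^\omega$ be the distribution on $[m]$ with $q^\omega_j=(1+\varepsilon)/m$ for $j\in\omega$ and $q^\omega_j=(1-\varepsilon)/m$ for $j\notin\omega$. For distributions $a,b,c$ on $[m]$, $\Pr_{(a,b,c)}$ denotes the probability when $X=(X_1,\dots,X_N)$ is i.i.d. with marginal $a$, $Y=(Y_1,\dots,Y_N)$ is i.i.d. with marginal $b$, $Z=(Z_1,\dots,Z_n)$ is i.i.d. with marginal $c$, and $X,Y,Z$ are independent. *)

theory Defs
  imports Complex_Main
begin

text \<open>Distributions on [m] = {1..m} are represented as functions nat => real
(only their values on {1..m} matter).\<close>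

definition unif :: "nat \<Rightarrow> nat \<Rightarrow> real" where
  "unif m j = 1 / real m"

definition qdist :: "nat \<Rightarrow> real \<Rightarrow> nat set \<Rightarrow> nat \<Rightarrow> real" where
  "qdist m \<epsilon> \<omega> j = (if j \<in> \<omega> then (1 + \<epsilon>) / real m else (1 - \<epsilon>) / real m)"

definition Kset :: "nat \<Rightarrow> nat set set" where
  "Kset m = {\<omega>. \<omega> \<subseteq> {1..m} \<and> card \<omega> = m div 2}"

definition seqs :: "nat \<Rightarrow> nat \<Rightarrow> nat list set" where
  "seqs m k = {xs. length xs = k \<and> set xs \<subseteq> {1..m}}"

text \<open>Probability of an event E(X,Y,Z) when X (length N) is i.i.d. a, Y (length N)
is i.i.d. b, Z (length n) is i.i.d. c, all independent.\<close>
definition Prob3 :: "nat \<Rightarrow> nat \<Rightarrow> nat \<Rightarrow> (nat \<Rightarrow> real) \<Rightarrow> (nat \<Rightarrow> real) \<Rightarrow> (nat \<Rightarrow> real)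
    \<Rightarrow> (nat list \<Rightarrow> nat list \<Rightarrow> nat list \<Rightarrow> bool) \<Rightarrow> real" where
  "Prob3 m N n a b c E =
     (\<Sum>(x, y, z) \<in> {(x, y, z). x \<in> seqs m N \<and> y \<in> seqs m N \<and> z \<in> seqs m n \<and> E x y z}.
        prod_list (map a x) * prod_list (map b y) * prod_list (map c z))"

definition eventB :: "nat list \<Rightarrow> nat list \<Rightarrow> nat list \<Rightarrow> bool" where
  "eventB x y z \<longleftrightarrow> distinct z \<and> set z \<inter> (set x \<union> set y) = {}"

end

theory Submission
  imports Defs
begin

text \<open>Given \<open>X = x\<close> and \<open>Y = y\<close>, the event \<open>B\<close> asks \<open>Z\<close> to consist of distinct symbols
  avoiding the at most \<open>2N\<close> symbols of \<open>x\<close> and \<open>y\<close>. Drawing \<open>Z\<close> one symbol at a time, the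
  \<open>i\<close>-th symbol must avoid at most \<open>2N + i\<close> forbidden symbols, each of mass at most \<open>2/m\<close>, so
  the conditional probability is at least \<open>\<Prod>i<n. 1 - 2(2N + i)/m\<close>. Once \<open>2(2N + n)/m \<le> 1/5\<close>,
  \<open>ln (1 - t) \<ge> -5t/4\<close> bounds its logarithm below by \<open>-5(Nn + n\<^sup>2/2)/m\<close>; so the claim holds
  even with \<open>o(1) = 0\<close>.\<close>

lemma finite_seqs: "finite (seqs m n)"
  unfolding seqs_def using finite_lists_length_eq[of "{1..m}" n] by (simp add: conj_commute)

lemma seqs_0: "seqs m 0 = {[]}"
  unfolding seqs_def by auto

lemma seqs_Suc: "seqs m (Suc n) = (\<lambda>(a, z). a # z) ` ({1..m} \<times> seqs m n)"
  unfolding seqs_def by (force simp: length_Suc_conv)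

lemma sum_seqs_Suc: "(\<Sum>z\<in>seqs m (Suc n). f z) = (\<Sum>a\<in>{1..m}. \<Sum>z\<in>seqs m n. f (a # z))"
proof -
  have "inj_on (\<lambda>(a, z). a # z) ({1..m} \<times> seqs m n)" by (auto simp: inj_on_def)
  then have "(\<Sum>z\<in>seqs m (Suc n). f z) = (\<Sum>(a, z)\<in>{1..m} \<times> seqs m n. f (a # z))"
    unfolding seqs_Suc by (simp add: sum.reindex case_prod_beta')
  then show ?thesis by (simp add: sum.cartesian_product)
qed

lemma sum_seqs_prod_list:
  "(\<Sum>z\<in>seqs m n. prod_list (map (c :: nat \<Rightarrow> real) z)) = (\<Sum>j\<in>{1..m}. c j) ^ n"
proof (induction n)
  case 0
  then show ?case by (simp add: seqs_0)
next
  case (Suc n)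
  have "(\<Sum>z\<in>seqs m (Suc n). prod_list (map c z))
      = (\<Sum>a\<in>{1..m}. c a * (\<Sum>z\<in>seqs m n. prod_list (map c z)))"
    by (simp add: sum_seqs_Suc sum_distrib_left)
  then show ?case by (simp add: Suc.IH sum_distrib_right)
qed

definition fresh_mass :: "nat \<Rightarrow> (nat \<Rightarrow> real) \<Rightarrow> nat \<Rightarrow> nat set \<Rightarrow> real" where
  "fresh_mass m c n S =
     (\<Sum>z\<in>seqs m n. if distinct z \<and> set z \<inter> S = {} then prod_list (map c z) else 0)"

lemma fresh_mass_0: "fresh_mass m c 0 S = 1"
  by (simp add: fresh_mass_def seqs_0)

lemma fresh_mass_Suc:
  "fresh_mass m c (Suc n) S = (\<Sum>a\<in>{1..m} - S. c a * fresh_mass m c n (insert a S))"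
proof -
  have "fresh_mass m c (Suc n) S = (\<Sum>a\<in>{1..m}. if a \<in> S then 0 else c a * fresh_mass m c n (insert a S))"
    unfolding fresh_mass_def sum_seqs_Suc
    by (intro sum.cong refl) (auto simp: sum_distrib_left intro!: sum.cong)
  then show ?thesis by (simp add: sum.If_cases Diff_eq)
qed

lemma fresh_mass_ge_prod:
  fixes c :: "nat \<Rightarrow> real"
  assumes c: "\<And>j. j \<in> {1..m} \<Longrightarrow> 0 \<le> c j \<and> c j \<le> b" and "0 \<le> b" and "finite S"
    and room: "b * real (card S + n) \<le> (\<Sum>j\<in>{1..m}. c j)"
  shows "(\<Prod>i<n. (\<Sum>j\<in>{1..m}. c j) - b * real (card S + i)) \<le> fresh_mass m c n S"
  using \<open>finite S\<close> room
proof (induction n arbitrary: S)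
  case 0
  then show ?case by (simp add: fresh_mass_0)
next
  case (Suc n)
  define T where "T = (\<Sum>j\<in>{1..m}. c j)"
  define P where "P = (\<Prod>i<n. T - b * real (card S + Suc i))"
  have IH: "P \<le> fresh_mass m c n (insert a S)" if "a \<notin> S" for a
    using Suc.IH[of "insert a S"] Suc.prems that by (simp add: P_def T_def)
  have factor_nonneg: "0 \<le> T - b * real (card S + i)" if "i \<le> Suc n" for i
  proof -
    have "b * real (card S + i) \<le> b * real (card S + Suc n)"
      using that \<open>0 \<le> b\<close> by (intro mult_left_mono) auto
    then show ?thesis using Suc.prems(2) by (simp add: T_def)
  qed
  have "sum c ({1..m} \<inter> S) \<le> b * card ({1..m} \<inter> S)"
    using sum_mono[of "{1..m} \<inter> S" c "\<lambda>_. b"] c by (auto simp: mult.commute)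
  also have "\<dots> \<le> b * card S"
    using Suc.prems \<open>0 \<le> b\<close> by (intro mult_left_mono) (auto intro: card_mono)
  moreover have "{1..m} - {1..m} \<inter> S = {1..m} - S" by blast
  ultimately have free_mass: "T - b * card S \<le> sum c ({1..m} - S)"
    using sum.subset_diff[of "{1..m} \<inter> S" "{1..m}" c] by (simp add: T_def Diff_Int2)
  have "0 \<le> P" unfolding P_def by (intro prod_nonneg factor_nonneg) auto
  have "(\<Prod>i<Suc n. T - b * real (card S + i)) = (T - b * card S) * P"
    unfolding prod.lessThan_Suc_shift P_def by simp
  also have "\<dots> \<le> sum c ({1..m} - S) * P"
    using free_mass \<open>0 \<le> P\<close> by (intro mult_right_mono)
  also have "\<dots> = (\<Sum>a\<in>{1..m} - S. c a * P)" by (simp add: sum_distrib_right)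
  also have "\<dots> \<le> fresh_mass m c (Suc n) S"
    unfolding fresh_mass_Suc using IH c by (intro sum_mono mult_left_mono) auto
  finally show ?case unfolding T_def .
qed

lemma ln_one_minus_ge:
  fixes t :: real
  assumes "0 \<le> t" "t \<le> 1/5"
  shows "- (5/4) * t \<le> ln (1 - t)"
proof -
  have "- ln (1 - t) = ln (1 / (1 - t))" using assms by (simp add: ln_div)
  also have "\<dots> \<le> 1 / (1 - t) - 1" using assms by (intro ln_le_minus_one) simp
  also have "\<dots> \<le> (5/4) * t"
    using assms mult_left_mono[of "t * 5" 1 t] by (simp add: field_simps)
  finally show ?thesis by linarith
qed

lemma ln_prod_one_minus_ge:
  fixes t :: "nat \<Rightarrow> real"
  assumes t: "\<And>i. i < n \<Longrightarrow> 0 \<le> t i \<and> t i \<le> s" and "s \<le> 1/5"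
  shows "- (5/4) * (real n * s) \<le> ln (\<Prod>i<n. 1 - t i)"
proof -
  have "- (5/4) * (real n * s) = (\<Sum>i<n. - (5/4) * s)" by simp
  also have "\<dots> \<le> (\<Sum>i<n. ln (1 - t i))"
    using t \<open>s \<le> 1/5\<close> ln_one_minus_ge[of "t _"] by (intro sum_mono) force
  also have "\<dots> = ln (\<Prod>i<n. 1 - t i)"
    using t \<open>s \<le> 1/5\<close> by (intro ln_prod[symmetric]) force+
  finally show ?thesis .
qed

lemma Prob3_given_xy:
  assumes "x \<in> seqs m N" "y \<in> seqs m N"
  shows "Prob3 m N n a b c (\<lambda>x' y' z. x' = x \<and> y' = y \<and> P z)
    = prod_list (map a x) * prod_list (map b y) *
      (\<Sum>z\<in>seqs m n. if P z then prod_list (map c z) else 0)"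
proof -
  have "{(x', y', z). x' \<in> seqs m N \<and> y' \<in> seqs m N \<and> z \<in> seqs m n \<and> x' = x \<and> y' = y \<and> P z}
      = (\<lambda>z. (x, y, z)) ` {z \<in> seqs m n. P z}"
    using assms by auto
  then have "Prob3 m N n a b c (\<lambda>x' y' z. x' = x \<and> y' = y \<and> P z)
      = (\<Sum>z | z \<in> seqs m n \<and> P z. prod_list (map a x) * prod_list (map b y) * prod_list (map c z))"
    unfolding Prob3_def by (simp add: sum.reindex inj_on_def)
  then show ?thesis
    by (auto simp: sum.inter_filter[OF finite_seqs] sum_distrib_left intro!: sum.cong)
qed

lemma cond_prob_eventB_eq_fresh_mass:
  assumes "x \<in> seqs m N" "y \<in> seqs m N" and "(\<Sum>j\<in>{1..m}. c j) = 1"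
    and "Prob3 m N n a b c (\<lambda>x' y' z. x' = x \<and> y' = y) > 0"
  shows "Prob3 m N n a b c (\<lambda>x' y' z. x' = x \<and> y' = y \<and> eventB x' y' z)
           / Prob3 m N n a b c (\<lambda>x' y' z. x' = x \<and> y' = y)
         = fresh_mass m c n (set x \<union> set y)"
proof -
  have "Prob3 m N n a b c (\<lambda>x' y' z. x' = x \<and> y' = y)
      = prod_list (map a x) * prod_list (map b y)"
    using Prob3_given_xy[OF assms(1,2), of n a b c "\<lambda>_. True"] assms(3)
    by (simp add: sum_seqs_prod_list)
  moreover have "(\<lambda>x' y' z. x' = x \<and> y' = y \<and> eventB x' y' z)
      = (\<lambda>x' y' z. x' = x \<and> y' = y \<and> eventB x y z)"
    by auto
  then have "Prob3 m N n a b c (\<lambda>x' y' z. x' = x \<and> y' = y \<and> eventB x' y' z)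
      = prod_list (map a x) * prod_list (map b y) * fresh_mass m c n (set x \<union> set y)"
    using Prob3_given_xy[OF assms(1,2), of n a b c "eventB x y"]
    by (simp add: fresh_mass_def eventB_def)
  ultimately show ?thesis using assms(4) by (metis nonzero_mult_div_cancel_left less_irrefl)
qed

lemma ln_cond_prob_eventB_ge:
  assumes "0 < m" and c: "\<And>j. j \<in> {1..m} \<Longrightarrow> 0 \<le> c j \<and> c j \<le> 2 / real m"
    and total: "(\<Sum>j\<in>{1..m}. c j) = 1"
    and x: "x \<in> seqs m N" and y: "y \<in> seqs m N"
    and small: "10 * (2 * real N + real n) \<le> real m"
    and pos: "Prob3 m N n a b c (\<lambda>x' y' z. x' = x \<and> y' = y) > 0"
  shows "- 5 * ((real N * real n + real n ^ 2) / real m)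
    \<le> ln (Prob3 m N n a b c (\<lambda>x' y' z. x' = x \<and> y' = y \<and> eventB x' y' z)
            / Prob3 m N n a b c (\<lambda>x' y' z. x' = x \<and> y' = y))"
proof -
  define S where "S = set x \<union> set y"
  define \<beta> :: real where "\<beta> = 2 / real m"
  define s where "s = \<beta> * (2 * real N + real n)"
  define t where "t i = \<beta> * real (card S + i)" for i
  have "card S \<le> card (set x) + card (set y)" unfolding S_def by (rule card_Un_le)
  also have "\<dots> \<le> 2 * N"
    using x y card_length[of x] card_length[of y] by (simp add: seqs_def)
  finally have "card S \<le> 2 * N" .
  then have t_le: "0 \<le> t i \<and> t i \<le> s" if "i \<le> n" for i
    using that unfolding t_def s_def \<beta>_def by (simp add: divide_right_mono)
  have "s \<le> 1/5" using small \<open>0 < m\<close> by (simp add: s_def \<beta>_def field_simps)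
  have "- 5 * ((real N * real n + real n ^ 2) / real m) \<le> - (5/4) * (real n * s)"
    using \<open>0 < m\<close> by (simp add: s_def \<beta>_def field_simps power2_eq_square)
  also have "\<dots> \<le> ln (\<Prod>i<n. 1 - t i)"
    using t_le \<open>s \<le> 1/5\<close> by (intro ln_prod_one_minus_ge) auto
  also have "\<dots> \<le> ln (fresh_mass m c n S)"
  proof (rule ln_mono)
    show "0 < (\<Prod>i<n. 1 - t i)"
    proof (rule prod_pos)
      show "0 < 1 - t i" if "i \<in> {..<n}" for i
        using t_le[of i] that \<open>s \<le> 1/5\<close> by simp
    qed
    have "(\<Prod>i<n. (\<Sum>j\<in>{1..m}. c j) - \<beta> * real (card S + i)) \<le> fresh_mass m c n S"
    proof (rule fresh_mass_ge_prod)
      show "\<beta> * real (card S + n) \<le> (\<Sum>j\<in>{1..m}. c j)"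
        using t_le[of n] \<open>s \<le> 1/5\<close> unfolding total t_def by simp
    qed (use c in \<open>auto simp: \<beta>_def S_def\<close>)
    then show "(\<Prod>i<n. 1 - t i) \<le> fresh_mass m c n S" by (simp only: total t_def)
  qed
  finally show ?thesis
    using cond_prob_eventB_eq_fresh_mass[OF x y total pos] by (simp add: S_def)
qed

lemma sum_unif: "0 < m \<Longrightarrow> (\<Sum>j\<in>{1..m}. unif m j) = 1"
  by (simp add: unif_def)

lemma unif_bounds: "0 \<le> unif m j \<and> unif m j \<le> 2 / real m"
  by (simp add: unif_def divide_right_mono)

lemma qdist_bounds:
  "0 \<le> \<epsilon> \<Longrightarrow> \<epsilon> \<le> 1 \<Longrightarrow> 0 \<le> qdist m \<epsilon> \<omega> j \<and> qdist m \<epsilon> \<omega> j \<le> 2 / real m"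
  by (simp add: qdist_def divide_right_mono)

lemma sum_qdist:
  assumes "even m" "0 < m" "\<omega> \<in> Kset m"
  shows "(\<Sum>j\<in>{1..m}. qdist m \<epsilon> \<omega> j) = 1"
proof -
  have \<omega>: "\<omega> \<subseteq> {1..m}" "card \<omega> = m div 2" using assms(3) by (auto simp: Kset_def)
  then have "card ({1..m} - \<omega>) = m div 2"
    using \<open>even m\<close> by (auto simp: card_Diff_subset finite_subset elim!: evenE)
  moreover have "(\<Sum>j\<in>{1..m}. qdist m \<epsilon> \<omega> j)
      = card \<omega> * ((1 + \<epsilon>) / m) + card ({1..m} - \<omega>) * ((1 - \<epsilon>) / m)"
    using \<omega> by (simp add: qdist_def sum.If_cases Int_absorb1 Diff_eq)
  ultimately show ?thesis
    using \<omega> assms(1,2) by (auto simp: field_simps elim!: evenE)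
qed

theorem lemma4:
  fixes N n :: "nat \<Rightarrow> nat" and \<epsilon> :: real
  assumes "0 < \<epsilon>" and "\<epsilon> \<le> 1"
    and "\<And>m. N m > 0" and "\<And>m. n m > 0"
    and "(\<lambda>m. real (N m) / real m) \<longlonglongrightarrow> 0"
    and "(\<lambda>m. real (n m) / real m) \<longlonglongrightarrow> 0"
  shows "\<exists>\<delta> :: nat \<Rightarrow> real. \<delta> \<longlonglongrightarrow> 0 \<and>
    (\<forall>\<^sub>F m in sequentially. even m \<longrightarrow>
      (\<forall>\<omega> \<in> Kset m. \<forall>x \<in> seqs m (N m). \<forall>y \<in> seqs m (N m).
        (Prob3 m (N m) (n m) (unif m) (qdist m \<epsilon> \<omega>) (unif m)
            (\<lambda>x' y' z. x' = x \<and> y' = y) > 0 \<longrightarrow>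
         ln (Prob3 m (N m) (n m) (unif m) (qdist m \<epsilon> \<omega>) (unif m)
               (\<lambda>x' y' z. x' = x \<and> y' = y \<and> eventB x' y' z)
             / Prob3 m (N m) (n m) (unif m) (qdist m \<epsilon> \<omega>) (unif m)
               (\<lambda>x' y' z. x' = x \<and> y' = y))
         \<ge> - 5 * ((real (N m) * real (n m) + real (n m) ^ 2) / real m) * (1 + \<delta> m))
      \<and> (Prob3 m (N m) (n m) (unif m) (qdist m \<epsilon> \<omega>) (qdist m \<epsilon> \<omega>)
            (\<lambda>x' y' z. x' = x \<and> y' = y) > 0 \<longrightarrow>
         ln (Prob3 m (N m) (n m) (unif m) (qdist m \<epsilon> \<omega>) (qdist m \<epsilon> \<omega>)
               (\<lambda>x' y' z. x' = x \<and> y' = y \<and> eventB x' y' z)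
             / Prob3 m (N m) (n m) (unif m) (qdist m \<epsilon> \<omega>) (qdist m \<epsilon> \<omega>)
               (\<lambda>x' y' z. x' = x \<and> y' = y))
         \<ge> - 5 * ((real (N m) * real (n m) + real (n m) ^ 2) / real m) * (1 + \<delta> m))))"
proof -
  have "(\<lambda>m. 2 * (real (N m) / real m) + real (n m) / real m) \<longlonglongrightarrow> 2 * 0 + 0"
    using assms(5,6) by (intro tendsto_intros)
  then have "\<forall>\<^sub>F m in sequentially. 2 * (real (N m) / real m) + real (n m) / real m < 1/10"
    by (rule order_tendstoD(2)) simp
  then have large: "\<forall>\<^sub>F m in sequentially. 0 < m \<and> 10 * (2 * real (N m) + real (n m)) \<le> real m"
    using eventually_gt_at_top[of 0]
    by eventually_elim (auto simp: field_simps)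
  show ?thesis
    by (intro exI[of _ "\<lambda>_. 0"] conjI tendsto_const, unfold add_0_right mult_1_right,
        rule eventually_mono[OF large], intro impI ballI conjI; rule ln_cond_prob_eventB_ge)
       (use assms(1,2) in \<open>auto simp: unif_bounds qdist_bounds sum_unif sum_qdist
                                 simp del: One_nat_def\<close>)
qed

end
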